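(* Let $G$ be an ordered graph, and let $k,\ell \in \mathbb{N}$. If the irreducible block decomposition of $G$ contains at least $k$ blocks of order at least $\ell$, then $S_n(G) \geqslant F_{n,\ell}$ for each $n \leqslant k$.
   Context: Ordered graphs of order $n$ have vertex set $[n]$ with the natural order. A pair of vertices $u<v$ separates the edges of $G$ if every edge $ij$ ($i<j$) has $j\leqslant u$ or $v\leqslant i$; $G$ is irreducible if no pair separates its edges. For ordered graphs $G_1,\dots,G_m$, $G_1+\dots+G_m$ is the ordered graph obtained by placing copies of $G_1,\dots,G_m$ consecutively from left to right with no edges between copies. Every ordered graph $G$ can be written uniquely as $G=G_1+\dots+G_m$ with each $G_i$ irreducible; $(G_1,\dots,G_m)$ is its irreducible block decomposition and the $G_i$ are its irreducible blocks. $S_n(G)$ is the number of distinct (non-isomorphic as ordered graphs) induced ordered subgraphs of $G$ of order $n$. $F_{n,\ell}$: $F_{n,\ell}=0$ for $n<0$, $F_{0,\ell}=1$, $F_{n,\ell}=F_{n-1,\ell}+\dots+F_{n-\ell,\ell}$ for $n\geqslant1$. *)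

theory Defs
  imports Main
begin

text \<open>An ordered graph of order N is represented canonically as a pair (N, E) with vertex
  set {0..<N} (the natural order; this is [N] shifted by one) and edge set E of pairs (i,j)
  with i < j < N. Since the representation is canonical, two ordered graphs are isomorphic
  (as ordered graphs) iff they are equal.\<close>

type_synonym ograph = "nat \<times> (nat \<times> nat) set"

definition ordered_graph :: "ograph \<Rightarrow> bool" where
  "ordered_graph G \<longleftrightarrow> snd G \<subseteq> {(i, j). i < j \<and> j < fst G}"

definition separates :: "ograph \<Rightarrow> nat \<Rightarrow> nat \<Rightarrow> bool" where
  "separates G u v \<longleftrightarrow> u < v \<and> v < fst G \<and> (\<forall>(i, j)\<in>snd G. j \<le> u \<or> v \<le> i)"

definition irreducible_og :: "ograph \<Rightarrow> bool" where
  "irreducible_og G \<longleftrightarrow> \<not> (\<exists>u v. separates G u v)"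

definition og_plus :: "ograph \<Rightarrow> ograph \<Rightarrow> ograph" where
  "og_plus G H = (fst G + fst H, snd G \<union> {(i + fst G, j + fst G) | i j. (i, j) \<in> snd H})"

definition og_sum :: "ograph list \<Rightarrow> ograph" where
  "og_sum Gs = foldr og_plus Gs (0, {})"

definition block_decomposition :: "ograph \<Rightarrow> ograph list \<Rightarrow> bool" where
  "block_decomposition G Gs \<longleftrightarrow>
     (\<forall>H\<in>set Gs. ordered_graph H \<and> fst H > 0 \<and> irreducible_og H) \<and> og_sum Gs = G"

definition og_induced :: "ograph \<Rightarrow> nat set \<Rightarrow> ograph" where
  "og_induced G A =
     (card A, {(card {a\<in>A. a < i}, card {a\<in>A. a < j}) | i j. (i, j) \<in> snd G \<and> i \<in> A \<and> j \<in> A})"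

definition S :: "nat \<Rightarrow> ograph \<Rightarrow> nat" where
  "S n G = card {og_induced G A | A. A \<subseteq> {0..<fst G} \<and> card A = n}"

fun F :: "nat \<Rightarrow> nat \<Rightarrow> nat" where
  "F 0 l = 1"
| "F (Suc n) l = (\<Sum>i<min l (Suc n). F (n - i) l)"

end

theory Submission
  imports Defs
begin

(* Write G = H + R with H the first irreducible block. If H has order at least l, then for every
   i < min l n the block H has an irreducible induced subgraph T_i on i + 1 vertices (grow the
   vertex set {0, ..., d} plus one further vertex, using an edge across each gap). An irreducible
   first summand is determined by the sum, so the graphs T_i + Y, with Y an induced subgraph of R on
   n - 1 - i vertices, are pairwise distinct induced subgraphs of G on n vertices. Hence
   S_n(G) >= sum_{i < min l n} S_{n-1-i}(R), which is the recursion of F_{n,l}; blocks of order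
   less than l are skipped, since S_n(R) <= S_n(H + R). *)

lemma fst_og_plus [simp]: "fst (og_plus G H) = fst G + fst H"
  by (simp add: og_plus_def)

lemma snd_og_plus:
  "snd (og_plus G H) = snd G \<union> map_prod (\<lambda>i. i + fst G) (\<lambda>i. i + fst G) ` snd H"
  by (auto simp: og_plus_def)

lemma og_plus_empty_left [simp]: "og_plus (0, {}) G = G"
  by (simp add: og_plus_def)

lemma og_sum_Cons [simp]: "og_sum (H # Hs) = og_plus H (og_sum Hs)"
  by (simp add: og_sum_def)

lemma ordered_graph_edge: "ordered_graph G \<Longrightarrow> (i, j) \<in> snd G \<Longrightarrow> i < j \<and> j < fst G"
  by (auto simp: ordered_graph_def)

definition rank :: "nat set \<Rightarrow> nat \<Rightarrow> nat" where
  "rank A i = card {a\<in>A. a < i}"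

lemma fst_og_induced [simp]: "fst (og_induced G A) = card A"
  by (simp add: og_induced_def)

lemma og_induced_conv:
  "og_induced G A = (card A, map_prod (rank A) (rank A) ` (snd G \<inter> A \<times> A))"
  unfolding og_induced_def rank_def by (auto simp: image_iff)

lemma rank_less_card: "finite A \<Longrightarrow> j \<in> A \<Longrightarrow> rank A j < card A"
  unfolding rank_def by (rule psubset_card_mono) auto

lemma rank_mono: "finite A \<Longrightarrow> i \<le> j \<Longrightarrow> rank A i \<le> rank A j"
  unfolding rank_def by (rule card_mono) auto

lemma rank_strict_mono: "finite A \<Longrightarrow> i \<in> A \<Longrightarrow> i < j \<Longrightarrow> rank A i < rank A j"
  unfolding rank_def by (rule psubset_card_mono) auto

lemma rank_Max: "finite A \<Longrightarrow> A \<noteq> {} \<Longrightarrow> rank A (Max A) = card A - 1"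
proof -
  assume "finite A" "A \<noteq> {}"
  then have "{a\<in>A. a < Max A} = A - {Max A}"
    using Max_ge le_neq_implies_less by blast
  then show ?thesis
    using \<open>finite A\<close> \<open>A \<noteq> {}\<close> by (simp add: rank_def)
qed

lemma ordered_graph_og_induced:
  assumes "ordered_graph G" "finite A"
  shows "ordered_graph (og_induced G A)"
  using assms rank_strict_mono rank_less_card
  by (fastforce simp: ordered_graph_def og_induced_conv dest: ordered_graph_edge)

lemma irreducible_og_crossing_edge:
  assumes "irreducible_og G" "Suc p < fst G"
  obtains i j where "(i, j) \<in> snd G" "i \<le> p" "p < j"
proof -
  have "\<not> separates G p (Suc p)"
    using assms(1) by (auto simp: irreducible_og_def)
  then show ?thesis
    using assms(2) that by (fastforce simp: separates_def)
qed

lemma og_plus_irreducible_order_le: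
  assumes "ordered_graph G" "0 < fst G" "irreducible_og G'"
    and "og_plus G H = og_plus G' H'"
  shows "fst G' \<le> fst G"
proof (rule ccontr)
  assume "\<not> fst G' \<le> fst G"
  then have "Suc (fst G - 1) < fst G'"
    using \<open>0 < fst G\<close> by simp
  then obtain i j where "(i, j) \<in> snd G'" "i \<le> fst G - 1" "fst G - 1 < j"
    by (rule irreducible_og_crossing_edge[OF \<open>irreducible_og G'\<close>])
  then have "(i, j) \<in> snd G'" "i < fst G" "fst G \<le> j"
    using \<open>0 < fst G\<close> by auto
  then have "(i, j) \<in> snd (og_plus G H)"
    using \<open>og_plus G H = og_plus G' H'\<close> by (simp add: snd_og_plus)
  then show False
    using \<open>i < fst G\<close> \<open>fst G \<le> j\<close>
    by (auto simp: snd_og_plus dest: ordered_graph_edge[OF \<open>ordered_graph G\<close>])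
qed

lemma snd_og_plus_left:
  "ordered_graph G \<Longrightarrow> snd G = {e \<in> snd (og_plus G H). snd e < fst G}"
  by (auto simp: snd_og_plus dest: ordered_graph_edge)

lemma snd_og_plus_right:
  "ordered_graph G \<Longrightarrow> snd H = {(i, j). (i + fst G, j + fst G) \<in> snd (og_plus G H)}"
  by (auto simp: snd_og_plus dest: ordered_graph_edge)

lemma og_plus_inject:
  assumes "ordered_graph G" "ordered_graph G'" "fst G = fst G'"
  shows "og_plus G H = og_plus G' H' \<longleftrightarrow> G = G' \<and> H = H'"
proof
  assume eq: "og_plus G H = og_plus G' H'"
  have "fst H = fst H'"
    using arg_cong[OF eq, of fst] assms(3) by simp
  moreover have "snd G = snd G'"
    using snd_og_plus_left[OF assms(1), of H] snd_og_plus_left[OF assms(2), of H']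
    unfolding eq assms(3) by (rule trans[OF _ sym])
  moreover have "snd H = snd H'"
    using snd_og_plus_right[OF assms(1), of H] snd_og_plus_right[OF assms(2), of H']
    unfolding eq assms(3) by (rule trans[OF _ sym])
  ultimately show "G = G' \<and> H = H'"
    using assms(3) by (simp add: prod_eq_iff)
qed simp

lemma og_plus_irreducible_inject:
  assumes "ordered_graph G" "irreducible_og G" "0 < fst G"
    and "ordered_graph G'" "irreducible_og G'" "0 < fst G'"
  shows "og_plus G H = og_plus G' H' \<longleftrightarrow> G = G' \<and> H = H'"
proof
  assume eq: "og_plus G H = og_plus G' H'"
  have "fst G = fst G'"
    using og_plus_irreducible_order_le[OF assms(1,3,5) eq]
      og_plus_irreducible_order_le[OF assms(4,6,2) eq[symmetric]] by simp
  with eq show "G = G' \<and> H = H'"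
    using og_plus_inject[OF assms(1,4)] by blast
qed simp

lemma og_induced_og_plus:
  assumes X: "ordered_graph X" and A: "A \<subseteq> {..<fst X}" and B: "finite B"
  shows "og_induced (og_plus X Y) (A \<union> (\<lambda>i. i + fst X) ` B) =
    og_plus (og_induced X A) (og_induced Y B)"
proof -
  define sh where "sh = (\<lambda>i::nat. i + fst X)"
  define C where "C = A \<union> sh ` B"
  have "finite A"
    using A finite_subset by blast
  have card_shift: "card (A \<union> sh ` D) = card A + card D" if "D \<subseteq> B" for D
  proof -
    have "finite D" "A \<inter> sh ` D = {}" "inj_on sh D"
      using that B A finite_subset by (auto simp: sh_def inj_on_def)
    then show ?thesis
      using \<open>finite A\<close> by (simp add: card_Un_disjoint card_image)
  qed
  have rank_low: "rank C i = rank A i" if "i < fst X" for i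
    unfolding rank_def C_def sh_def using that by (intro arg_cong[where f = card]) auto
  have rank_high: "rank C (sh j) = rank B j + card A" for j
  proof -
    have "{c\<in>C. c < sh j} = A \<union> sh ` {b\<in>B. b < j}"
      using A by (auto simp: C_def sh_def)
    then show ?thesis
      unfolding rank_def by (simp add: card_shift)
  qed
  have edges: "snd (og_plus X Y) \<inter> C \<times> C =
      (snd X \<inter> A \<times> A) \<union> map_prod sh sh ` (snd Y \<inter> B \<times> B)"
    using A by (auto simp: snd_og_plus C_def sh_def dest: ordered_graph_edge[OF X])
  have low: "map_prod (rank C) (rank C) ` (snd X \<inter> A \<times> A) =
      map_prod (rank A) (rank A) ` (snd X \<inter> A \<times> A)"
    by (rule image_cong) (auto simp: rank_low dest: ordered_graph_edge[OF X])
  have high: "map_prod (rank C) (rank C) ` map_prod sh sh ` (snd Y \<inter> B \<times> B) =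
      map_prod (\<lambda>i. i + card A) (\<lambda>i. i + card A) ` map_prod (rank B) (rank B) ` (snd Y \<inter> B \<times> B)"
    by (simp add: image_image rank_high map_prod_def split_def)
  have "snd (og_induced (og_plus X Y) C) = map_prod (rank C) (rank C) ` (snd (og_plus X Y) \<inter> C \<times> C)"
    by (simp add: og_induced_conv)
  also have "\<dots> = snd (og_plus (og_induced X A) (og_induced Y B))"
    unfolding edges image_Un low high by (simp add: snd_og_plus og_induced_conv)
  finally have "og_induced (og_plus X Y) C = og_plus (og_induced X A) (og_induced Y B)"
    using card_shift[of B] by (simp add: prod_eq_iff C_def)
  then show ?thesis
    by (simp add: C_def sh_def)
qed

definition induced_subgraphs :: "nat \<Rightarrow> ograph \<Rightarrow> ograph set" where
  "induced_subgraphs n G = {og_induced G A | A. A \<subseteq> {..<fst G} \<and> card A = n}"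

lemma S_eq_card_induced_subgraphs: "S n G = card (induced_subgraphs n G)"
  by (simp add: S_def induced_subgraphs_def atLeast0LessThan)

lemma finite_induced_subgraphs: "finite (induced_subgraphs n G)"
proof (rule finite_subset)
  show "induced_subgraphs n G \<subseteq> og_induced G ` Pow {..<fst G}"
    by (auto simp: induced_subgraphs_def)
qed simp

lemma fst_induced_subgraphs: "T \<in> induced_subgraphs n G \<Longrightarrow> fst T = n"
  by (auto simp: induced_subgraphs_def)

lemma induced_subgraphs_0: "induced_subgraphs 0 G = {(0, {})}"
proof -
  have "A \<subseteq> {..<fst G} \<and> card A = 0 \<longleftrightarrow> A = {}" for A
    using finite_subset[of A "{..<fst G}"] by auto
  then show ?thesis
    by (simp add: induced_subgraphs_def og_induced_def)
qed

lemma S_0 [simp]: "S 0 G = 1"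
  by (simp add: S_eq_card_induced_subgraphs induced_subgraphs_0)

lemma og_plus_in_induced_subgraphs:
  assumes "ordered_graph X" "T \<in> induced_subgraphs c X" "R \<in> induced_subgraphs d Y"
  shows "og_plus T R \<in> induced_subgraphs (c + d) (og_plus X Y)"
proof -
  obtain A B where A: "T = og_induced X A" "A \<subseteq> {..<fst X}" "card A = c"
    and B: "R = og_induced Y B" "B \<subseteq> {..<fst Y}" "card B = d"
    using assms(2,3) by (auto simp: induced_subgraphs_def)
  define C where "C = A \<union> (\<lambda>i. i + fst X) ` B"
  have "finite B"
    using B(2) finite_subset by auto
  have eq: "og_plus T R = og_induced (og_plus X Y) C"
    using og_induced_og_plus[OF assms(1) A(2) \<open>finite B\<close>] A(1) B(1) by (simp add: C_def)
  moreover have "C \<subseteq> {..<fst (og_plus X Y)}"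
    using A(2) B(2) by (auto simp: C_def)
  moreover have "card C = c + d"
    using arg_cong[OF eq, of fst] A B by simp
  ultimately show ?thesis
    by (auto simp: induced_subgraphs_def)
qed

lemma S_le_S_og_plus: "ordered_graph H \<Longrightarrow> S n G \<le> S n (og_plus H G)"
  unfolding S_eq_card_induced_subgraphs
  using og_plus_in_induced_subgraphs[of H "(0, {})" 0 _ n G]
  by (intro card_mono finite_induced_subgraphs) (auto simp: induced_subgraphs_0)

(* Every gap between consecutive vertices of A is spanned by an edge inside A: irreducibility of
   the subgraph induced on A, phrased in the original labels. *)
definition bridged :: "(nat \<times> nat) set \<Rightarrow> nat set \<Rightarrow> bool" where
  "bridged E A \<longleftrightarrow>
     (\<forall>a\<in>A. (\<exists>b\<in>A. a < b) \<longrightarrow> (\<exists>i j. (i, j) \<in> E \<and> i \<in> A \<and> j \<in> A \<and> i \<le> a \<and> a < j))"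

lemma bridgedD:
  assumes "bridged E A" "a \<in> A" "b \<in> A" "a < b"
  obtains i j where "(i, j) \<in> E" "i \<in> A" "j \<in> A" "i \<le> a" "a < j"
  using assms unfolding bridged_def by blast

lemma bridged_irreducible:
  assumes "finite A" "bridged (snd G) A"
  shows "irreducible_og (og_induced G A)"
proof -
  have False if "separates (og_induced G A) u v" for u v
  proof -
    have "u < v" "v < card A"
      and sep: "\<And>x y. (x, y) \<in> snd (og_induced G A) \<Longrightarrow> y \<le> u \<or> v \<le> x"
      using that by (auto simp: separates_def)
    \<comment> \<open>a is the last vertex whose new label is at most u; the edge bridging the gap after a
      crosses the separating pair.\<close>
    define R where "R = {x\<in>A. rank A x \<le> u}"
    have "A \<noteq> {}"
      using \<open>v < card A\<close> by auto
    have "{x\<in>A. x < Min A} = {}"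
      using Min_le[OF \<open>finite A\<close>] by fastforce
    then have "rank A (Min A) = 0"
      unfolding rank_def by (simp only: card.empty)
    then have "Min A \<in> R"
      using \<open>finite A\<close> \<open>A \<noteq> {}\<close> by (simp add: R_def)
    have "Max A \<notin> R"
      using rank_Max[OF \<open>finite A\<close> \<open>A \<noteq> {}\<close>] \<open>u < v\<close> \<open>v < card A\<close> by (auto simp: R_def)
    define a where "a = Max R"
    have "finite R"
      using \<open>finite A\<close> by (simp add: R_def)
    then have "a \<in> R" "a \<in> A" "rank A a \<le> u"
      using \<open>Min A \<in> R\<close> Max_in[of R] by (auto simp: a_def R_def)
    moreover have "a \<le> Max A"
      using Max_ge[OF \<open>finite A\<close> \<open>a \<in> A\<close>] .
    ultimately have "a < Max A"
      using \<open>Max A \<notin> R\<close> le_neq_implies_less by blast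
    then obtain i j where ij: "(i, j) \<in> snd G" "i \<in> A" "j \<in> A" "i \<le> a" "a < j"
      using assms(2) \<open>a \<in> A\<close> Max_in[OF \<open>finite A\<close> \<open>A \<noteq> {}\<close>]
      unfolding bridged_def by blast
    have "rank A i \<le> u"
      using rank_mono[OF \<open>finite A\<close> \<open>i \<le> a\<close>] \<open>rank A a \<le> u\<close> by simp
    have "j \<notin> R"
      using Max_ge[OF \<open>finite R\<close>, of j] \<open>a < j\<close> unfolding a_def by linarith
    then have "\<not> rank A j \<le> u"
      using \<open>j \<in> A\<close> by (simp add: R_def)
    moreover have "(rank A i, rank A j) \<in> snd (og_induced G A)"
      using ij by (auto simp: og_induced_conv)
    ultimately show False
      using sep \<open>rank A i \<le> u\<close> \<open>u < v\<close> by fastforce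
  qed
  then show ?thesis
    by (auto simp: irreducible_og_def)
qed

lemma bridged_insert_greater:
  assumes "bridged E A" "(i, j) \<in> E" "i \<in> A" "\<forall>a\<in>A. a < j"
  shows "bridged E (insert j A)"
  unfolding bridged_def
proof (intro ballI impI)
  fix a assume "a \<in> insert j A" "\<exists>b\<in>insert j A. a < b"
  then have "a \<in> A"
    using assms(4) by auto
  show "\<exists>i' j'. (i', j') \<in> E \<and> i' \<in> insert j A \<and> j' \<in> insert j A \<and> i' \<le> a \<and> a < j'"
  proof (cases "\<exists>b\<in>A. a < b")
    case True
    then obtain b where "b \<in> A" "a < b"
      by blast
    then obtain i' j' where "(i', j') \<in> E" "i' \<in> A" "j' \<in> A" "i' \<le> a" "a < j'"
      using bridgedD[OF assms(1) \<open>a \<in> A\<close>] by blast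
    then show ?thesis
      by blast
  next
    case False
    then have "i \<le> a"
      using \<open>i \<in> A\<close> by (simp add: not_less)
    then show ?thesis
      using assms(2,4) \<open>i \<in> A\<close> \<open>a \<in> A\<close> by blast
  qed
qed

lemma bridged_insert_crossed:
  assumes "bridged E A" "(i, j) \<in> E" "i \<in> A" "j \<in> A" "i \<le> y" "y < j"
  shows "bridged E (insert y A)"
  unfolding bridged_def
proof (intro ballI impI)
  fix a assume "a \<in> insert y A" "\<exists>b\<in>insert y A. a < b"
  show "\<exists>i' j'. (i', j') \<in> E \<and> i' \<in> insert y A \<and> j' \<in> insert y A \<and> i' \<le> a \<and> a < j'"
  proof (cases "a = y")
    case True
    then show ?thesis
      using assms(2-6) by blast
  next
    case False
    then have "a \<in> A"
      using \<open>a \<in> insert y A\<close> by simp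
    moreover obtain b where "b \<in> A" "a < b"
      using \<open>\<exists>b\<in>insert y A. a < b\<close> \<open>y < j\<close> \<open>j \<in> A\<close> by force
    ultimately obtain i' j' where "(i', j') \<in> E" "i' \<in> A" "j' \<in> A" "i' \<le> a" "a < j'"
      using bridgedD[OF assms(1)] by blast
    then show ?thesis
      by blast
  qed
qed

lemma irreducible_bridged_prefix:
  assumes "ordered_graph H" "irreducible_og H"
  shows "d + 2 \<le> fst H \<Longrightarrow> \<exists>x. d < x \<and> x < fst H \<and> bridged (snd H) (insert x {..d})"
proof (induction d)
  case 0
  then obtain i j where "(i, j) \<in> snd H" "i = 0" "0 < j"
    using irreducible_og_crossing_edge[OF assms(2), of 0] by auto
  moreover have "bridged (snd H) {0}"
    by (simp add: bridged_def)
  ultimately have "bridged (snd H) (insert j {..0})"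
    using bridged_insert_greater[of "snd H" "{0}" i j] by simp
  then show ?case
    using \<open>(i, j) \<in> snd H\<close> \<open>0 < j\<close> ordered_graph_edge[OF assms(1)] by blast
next
  case (Suc d)
  then obtain x where "d < x" "x < fst H" and bridged: "bridged (snd H) (insert x {..d})"
    by auto
  show ?case
  proof (cases "x = Suc d")
    case True
    then obtain i j where "(i, j) \<in> snd H" "i \<le> Suc d" "Suc d < j"
      using irreducible_og_crossing_edge[OF assms(2), of "Suc d"] Suc.prems by auto
    moreover have "insert x {..d} = {..Suc d}"
      using True by auto
    ultimately have "bridged (snd H) (insert j {..Suc d})"
      using bridged_insert_greater[of "snd H" "{..Suc d}" i j] bridged by simp
    then show ?thesis
      using \<open>(i, j) \<in> snd H\<close> \<open>Suc d < j\<close> ordered_graph_edge[OF assms(1)] by blast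
  next
    case False
    obtain i j where "(i, j) \<in> snd H" "i \<in> insert x {..d}" "j \<in> insert x {..d}" "i \<le> d" "d < j"
      using bridgedD[OF bridged, of d x] \<open>d < x\<close> by auto
    moreover have "Suc d < x" "j = x"
      using False \<open>d < x\<close> \<open>d < j\<close> \<open>j \<in> insert x {..d}\<close> by auto
    ultimately have "bridged (snd H) (insert (Suc d) (insert x {..d}))"
      using bridged_insert_crossed[OF bridged, of i j "Suc d"] by simp
    moreover have "insert (Suc d) (insert x {..d}) = insert x {..Suc d}"
      by auto
    ultimately show ?thesis
      using \<open>Suc d < x\<close> \<open>x < fst H\<close> by auto
  qed
qed

lemma ex_bridged_subset:
  assumes "ordered_graph H" "irreducible_og H" "0 < c" "c \<le> fst H"
  shows "\<exists>A \<subseteq> {..<fst H}. card A = c \<and> bridged (snd H) A"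
proof (cases "c = 1")
  case True
  have "bridged (snd H) {0}"
    by (simp add: bridged_def)
  then show ?thesis
    using True assms(4) by (intro exI[of _ "{0}"]) auto
next
  case False
  define d where "d = c - 2"
  have "c = d + 2"
    using False assms(3) by (simp add: d_def)
  then obtain x where "d < x" "x < fst H" "bridged (snd H) (insert x {..d})"
    using irreducible_bridged_prefix[OF assms(1,2)] assms(4) by blast
  moreover have "card (insert x {..d}) = c"
    using \<open>c = d + 2\<close> \<open>d < x\<close> by simp
  moreover have "insert x {..d} \<subseteq> {..<fst H}"
    using \<open>d < x\<close> \<open>x < fst H\<close> by auto
  ultimately show ?thesis
    by blast
qed

lemma ex_irreducible_induced_subgraph:
  assumes "ordered_graph H" "irreducible_og H" "0 < c" "c \<le> fst H"
  shows "\<exists>T \<in> induced_subgraphs c H. ordered_graph T \<and> irreducible_og T"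
proof -
  obtain A where "A \<subseteq> {..<fst H}" "card A = c" "bridged (snd H) A"
    using ex_bridged_subset[OF assms] by blast
  moreover have "finite A"
    using \<open>A \<subseteq> {..<fst H}\<close> finite_subset by blast
  ultimately show ?thesis
    using ordered_graph_og_induced[OF assms(1)] bridged_irreducible[of A H]
    unfolding induced_subgraphs_def by blast
qed

lemma inj_on_og_plus_irreducible:
  assumes "\<And>i. i \<in> I \<Longrightarrow> ordered_graph (T i) \<and> irreducible_og (T i) \<and> 0 < fst (T i)"
    and "inj_on (\<lambda>i. fst (T i)) I"
  shows "inj_on (\<lambda>(i, Y). og_plus (T i) Y) (Sigma I B)"
proof (rule inj_onI)
  fix p q assume "p \<in> Sigma I B" "q \<in> Sigma I B"
    and eq: "(\<lambda>(i, Y). og_plus (T i) Y) p = (\<lambda>(i, Y). og_plus (T i) Y) q"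
  obtain i Y j Y' where pq: "p = (i, Y)" "q = (j, Y')" and "i \<in> I" "j \<in> I"
    using \<open>p \<in> Sigma I B\<close> \<open>q \<in> Sigma I B\<close> by auto
  have "og_plus (T i) Y = og_plus (T j) Y'"
    using eq pq by simp
  then have "T i = T j \<and> Y = Y'"
    using og_plus_irreducible_inject[of "T i" "T j" Y Y'] assms(1)[OF \<open>i \<in> I\<close>] assms(1)[OF \<open>j \<in> I\<close>]
    by simp
  moreover have "i = j"
    using inj_onD[OF assms(2) _ \<open>i \<in> I\<close> \<open>j \<in> I\<close>] \<open>T i = T j \<and> Y = Y'\<close> by simp
  ultimately show "p = q"
    using pq by simp
qed

lemma sum_S_le_S_og_plus_irreducible:
  assumes "ordered_graph H" "irreducible_og H" "M \<le> fst H" "M \<le> Suc m"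
  shows "(\<Sum>i<M. S (m - i) G) \<le> S (Suc m) (og_plus H G)"
proof -
  have ex_T: "\<forall>i\<in>{..<M}. \<exists>T. T \<in> induced_subgraphs (Suc i) H \<and> ordered_graph T \<and> irreducible_og T"
  proof
    fix i assume "i \<in> {..<M}"
    then have "Suc i \<le> fst H"
      using assms(3) by simp
    then show "\<exists>T. T \<in> induced_subgraphs (Suc i) H \<and> ordered_graph T \<and> irreducible_og T"
      using ex_irreducible_induced_subgraph[OF assms(1,2), of "Suc i"] by blast
  qed
  obtain T where "\<forall>i\<in>{..<M}.
      T i \<in> induced_subgraphs (Suc i) H \<and> ordered_graph (T i) \<and> irreducible_og (T i)"
    using bchoice[OF ex_T] by blast
  then have T: "T i \<in> induced_subgraphs (Suc i) H \<and> ordered_graph (T i) \<and> irreducible_og (T i)"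
    if "i < M" for i
    using that by simp
  then have "fst (T i) = Suc i" if "i < M" for i
    using fst_induced_subgraphs that by blast
  then have "inj_on (\<lambda>(i, Y). og_plus (T i) Y) (SIGMA i:{..<M}. induced_subgraphs (m - i) G)"
    using T by (intro inj_on_og_plus_irreducible) (auto simp: inj_on_def)
  moreover have "(\<lambda>(i, Y). og_plus (T i) Y) ` (SIGMA i:{..<M}. induced_subgraphs (m - i) G)
      \<subseteq> induced_subgraphs (Suc m) (og_plus H G)"
  proof (rule image_subsetI)
    fix p assume "p \<in> (SIGMA i:{..<M}. induced_subgraphs (m - i) G)"
    then obtain i Y where p: "p = (i, Y)" "i < M" "Y \<in> induced_subgraphs (m - i) G"
      by auto
    moreover have "Suc i + (m - i) = Suc m"
      using \<open>i < M\<close> assms(4) by simp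
    ultimately show "(\<lambda>(i, Y). og_plus (T i) Y) p \<in> induced_subgraphs (Suc m) (og_plus H G)"
      using og_plus_in_induced_subgraphs[OF assms(1), of "T i" "Suc i" Y "m - i" G] T[OF \<open>i < M\<close>]
      by simp
  qed
  ultimately have "card (SIGMA i:{..<M}. induced_subgraphs (m - i) G) \<le> S (Suc m) (og_plus H G)"
    unfolding S_eq_card_induced_subgraphs by (rule card_inj_on_le) (rule finite_induced_subgraphs)
  then show ?thesis
    by (simp add: card_SigmaI finite_induced_subgraphs S_eq_card_induced_subgraphs)
qed

lemma F_le_S_og_sum:
  assumes "\<forall>H\<in>set Gs. ordered_graph H \<and> irreducible_og H"
    and "n \<le> length (filter (\<lambda>H. l \<le> fst H) Gs)"
  shows "F n l \<le> S n (og_sum Gs)"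
  using assms
proof (induction Gs arbitrary: n)
  case Nil
  then show ?case by simp
next
  case (Cons H Hs)
  then have H: "ordered_graph H" "irreducible_og H"
    by simp_all
  consider "n = 0" | m where "n = Suc m" "l \<le> fst H" | "0 < n" "\<not> l \<le> fst H"
    using not0_implies_Suc by blast
  then show ?case
  proof cases
    case 1
    then show ?thesis by simp
  next
    case 2
    then have "F (m - i) l \<le> S (m - i) (og_sum Hs)" for i
      using Cons by (intro Cons.IH) auto
    then have "F n l \<le> (\<Sum>i<min l (Suc m). S (m - i) (og_sum Hs))"
      using \<open>n = Suc m\<close> by (simp add: sum_mono)
    also have "\<dots> \<le> S n (og_sum (H # Hs))"
      using sum_S_le_S_og_plus_irreducible[OF H] \<open>n = Suc m\<close> \<open>l \<le> fst H\<close> by simp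
    finally show ?thesis .
  next
    case 3
    then have "F n l \<le> S n (og_sum Hs)"
      using Cons by (intro Cons.IH) auto
    also have "\<dots> \<le> S n (og_sum (H # Hs))"
      using S_le_S_og_plus[OF H(1)] by simp
    finally show ?thesis .
  qed
qed

theorem lemma15:
  fixes G :: ograph and Gs :: "ograph list" and k l n :: nat
  assumes "ordered_graph G"
    and "block_decomposition G Gs"
    and "k \<le> length (filter (\<lambda>H. fst H \<ge> l) Gs)"
    and "n \<le> k"
  shows "S n G \<ge> F n l"
proof -
  have "\<forall>H\<in>set Gs. ordered_graph H \<and> irreducible_og H" "og_sum Gs = G"
    using assms(2) by (auto simp: block_decomposition_def)
  moreover have "n \<le> length (filter (\<lambda>H. l \<le> fst H) Gs)"
    using assms(3,4) by simp
  ultimately show ?thesis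
    using F_le_S_og_sum by metis
qed

end
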